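(* Let $\Omega\subset\mathbb{R}^d$ be a bounded domain, $\kappa\in L^\infty(\Omega)$ with $\kappa\ge\kappa_0>0$, and $a(u,v)=\int_\Omega\kappa\nabla u\cdot\nabla v\,dx$, $\|u\|_a^2=a(u,u)$. Let $V_H\subset H^1_0(\Omega)$ be a finite-dimensional space with $V_H=V_{H,1}+V_{H,2}$ for subspaces $V_{H,1},V_{H,2}$. Let $\tau>0$, $N\ge 2$, and let $u_{H,1}^n\in V_{H,1}$, $u_{H,2}^n\in V_{H,2}$ ($n=0,\dots,N$), $u_H^n=u_{H,1}^n+u_{H,2}^n$, satisfy for $n=1,\dots,N-1$: $$(u_H^{n+1}-2u_H^n+u_H^{n-1},w)+\frac{\tau^2}{2}a(u_{H,1}^{n+1}+u_{H,1}^{n-1}+2u_{H,2}^n,w)=0\quad\forall w\in V_{H,1},$$ $$(u_H^{n+1}-2u_H^n+u_H^{n-1},w)+\tau^2a(u_{H,1}^{n}+u_{H,2}^n,w)=0\quad\forall w\in V_{H,2}.$$ Define for $n=0,\dots,N-1$ $$E^{n+\frac12}=\|u_H^{n+1}-u_H^n\|^2+\frac{\tau^2}{2}\sum_{i=1,2}\big(\|u_{H,i}^{n+1}\|_a^2+\|u_{H,i}^n\|_a^2\big)+\tau^2a(u_{H,2}^{n+1},u_{H,1}^n)+\tau^2a(u_{H,1}^{n+1},u_{H,2}^n)-\frac{\tau^2}{2}\|u_{H,2}^{n+1}-u_{H,2}^n\|_a^2.$$ Then $E^{n+\frac12}=E^{n-\frac12}$ for all $n=1,\dots,N-1$.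
   Context: $(\cdot,\cdot)$ and $\|\cdot\|$ denote the $L^2(\Omega)$ inner product and norm. The two equations form the partially explicit (implicit in $V_{H,1}$, explicit in $V_{H,2}$) time discretization of the wave equation $u_{tt}=\nabla\cdot(\kappa\nabla u)$ with homogeneous Dirichlet boundary conditions. *)

theory Defs
  imports "HOL-Analysis.Analysis"
begin

text \<open>Abstract setting: the ambient real inner product space 'v plays the role of
H^1_0(Omega) equipped with the L^2(Omega) inner product (so inner = (.,.), norm = L^2 norm);
the bilinear form a plays the role of a(u,v) = int kappa grad u . grad v.\<close>

definition a_norm_sq :: "('v \<Rightarrow> 'v \<Rightarrow> real) \<Rightarrow> 'v \<Rightarrow> real" where
  "a_norm_sq a u = a u u"

text \<open>energy a tau u1 u2 n is E^{n+1/2}; the coarse solution is u_H^n = u1 n + u2 n.\<close>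
definition energy ::
  "('v::real_inner \<Rightarrow> 'v \<Rightarrow> real) \<Rightarrow> real \<Rightarrow> (nat \<Rightarrow> 'v) \<Rightarrow> (nat \<Rightarrow> 'v) \<Rightarrow> nat \<Rightarrow> real" where
  "energy a tau u1 u2 n =
     (norm ((u1 (Suc n) + u2 (Suc n)) - (u1 n + u2 n)))\<^sup>2
     + tau\<^sup>2 / 2 * ((a_norm_sq a (u1 (Suc n)) + a_norm_sq a (u1 n))
                    + (a_norm_sq a (u2 (Suc n)) + a_norm_sq a (u2 n)))
     + tau\<^sup>2 * a (u2 (Suc n)) (u1 n)
     + tau\<^sup>2 * a (u1 (Suc n)) (u2 n)
     - tau\<^sup>2 / 2 * a_norm_sq a (u2 (Suc n) - u2 n)"

end

theory Submission
  imports Defs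
begin

text \<open>Test the V_{H,1}-equation with u_{H,1}^{n+1} - u_{H,1}^{n-1} and the V_{H,2}-equation with
u_{H,2}^{n+1} - u_{H,2}^{n-1} and add. The mass terms telescope because
(x - 2y + z, x - z) = |x - y|^2 - |y - z|^2, and, once the last term of the energy is expanded,
the stiffness terms telescope as well by symmetry of a. The sum is therefore
E^{n+1/2} - E^{n-1/2}, which must vanish.\<close>

definition potential_energy :: "('v \<Rightarrow> 'v \<Rightarrow> real) \<Rightarrow> 'v \<Rightarrow> 'v \<Rightarrow> 'v \<Rightarrow> 'v \<Rightarrow> real" where
  "potential_energy a x1 x2 y1 y2 = (a x1 x1 + a y1 y1) / 2 + a x2 y2 + a x2 y1 + a x1 y2"

lemma inner_second_difference:
  fixes x y z :: "'v::real_inner"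
  shows "inner (x - 2 *\<^sub>R y + z) (x - z) = (norm (x - y))\<^sup>2 - (norm (y - z))\<^sup>2"
  by (simp add: power2_norm_eq_inner inner_diff inner_add inner_commute algebra_simps)

lemma energy_eq_kinetic_potential:
  fixes a :: "'v::real_inner \<Rightarrow> 'v \<Rightarrow> real"
  assumes bl: "bilinear a" and sym: "\<And>u v. a u v = a v u"
  shows "energy a tau u1 u2 n = (norm ((u1 (Suc n) + u2 (Suc n)) - (u1 n + u2 n)))\<^sup>2
           + tau\<^sup>2 * potential_energy a (u1 (Suc n)) (u2 (Suc n)) (u1 n) (u2 n)"
proof -
  have "a (u2 (Suc n) - u2 n) (u2 (Suc n) - u2 n)
      = a (u2 (Suc n)) (u2 (Suc n)) - 2 * a (u2 (Suc n)) (u2 n) + a (u2 n) (u2 n)"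
    using sym[of "u2 n" "u2 (Suc n)"] by (simp add: bilinear_lsub[OF bl] bilinear_rsub[OF bl])
  then show ?thesis
    unfolding energy_def potential_energy_def a_norm_sq_def by (simp only:) (simp add: field_simps)
qed

lemma potential_energy_difference:
  fixes a :: "'v::real_vector \<Rightarrow> 'v \<Rightarrow> real"
  assumes bl: "bilinear a" and sym: "\<And>u v. a u v = a v u"
  shows "potential_energy a x1 x2 y1 y2 - potential_energy a y1 y2 z1 z2
           = a (x1 + z1 + 2 *\<^sub>R y2) (x1 - z1) / 2 + a (y1 + y2) (x2 - z2)"
  using sym[of z1 x1] sym[of y2 x1] sym[of y2 z1] sym[of y1 x2] sym[of y2 x2]
  by (simp add: potential_energy_def bilinear_ladd[OF bl] bilinear_lsub[OF bl] bilinear_lmul[OF bl]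
      bilinear_radd[OF bl] bilinear_rsub[OF bl] field_simps)

lemma energy_step_eq:
  fixes a :: "'v::real_inner \<Rightarrow> 'v \<Rightarrow> real"
  assumes bl: "bilinear a" and sym: "\<And>u v. a u v = a v u"
    and test1: "inner (u1 (Suc (Suc m)) + u2 (Suc (Suc m)) - 2 *\<^sub>R (u1 (Suc m) + u2 (Suc m)) + (u1 m + u2 m))
                  (u1 (Suc (Suc m)) - u1 m)
       + tau\<^sup>2 / 2 * a (u1 (Suc (Suc m)) + u1 m + 2 *\<^sub>R u2 (Suc m)) (u1 (Suc (Suc m)) - u1 m) = 0"
    and test2: "inner (u1 (Suc (Suc m)) + u2 (Suc (Suc m)) - 2 *\<^sub>R (u1 (Suc m) + u2 (Suc m)) + (u1 m + u2 m))
                  (u2 (Suc (Suc m)) - u2 m)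
       + tau\<^sup>2 * a (u1 (Suc m) + u2 (Suc m)) (u2 (Suc (Suc m)) - u2 m) = 0"
  shows "energy a tau u1 u2 (Suc m) = energy a tau u1 u2 m"
proof -
  let ?x = "u1 (Suc (Suc m)) + u2 (Suc (Suc m))" and ?y = "u1 (Suc m) + u2 (Suc m)" and ?z = "u1 m + u2 m"
  have split: "?x - ?z = (u1 (Suc (Suc m)) - u1 m) + (u2 (Suc (Suc m)) - u2 m)"
    by (simp add: algebra_simps)
  have "energy a tau u1 u2 (Suc m) - energy a tau u1 u2 m
      = inner (?x - 2 *\<^sub>R ?y + ?z) (?x - ?z)
        + tau\<^sup>2 * (potential_energy a (u1 (Suc (Suc m))) (u2 (Suc (Suc m))) (u1 (Suc m)) (u2 (Suc m))
                   - potential_energy a (u1 (Suc m)) (u2 (Suc m)) (u1 m) (u2 m))"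
    unfolding energy_eq_kinetic_potential[OF bl sym] inner_second_difference
    by (simp add: algebra_simps)
  also have "\<dots> = 0"
    unfolding potential_energy_difference[OF bl sym] split inner_add_right
    using test1 test2 by (simp add: algebra_simps)
  finally show ?thesis by simp
qed

theorem mainTheorem1:
  fixes a :: "'v::real_inner \<Rightarrow> 'v \<Rightarrow> real"
    and VH1 VH2 :: "'v set"
    and tau :: real and N :: nat
    and u1 u2 :: "nat \<Rightarrow> 'v"
  assumes a_bilinear: "bilinear a"
    and a_sym: "\<And>u v. a u v = a v u"
    and a_coercive: "\<exists>c>0. \<forall>u. a u u \<ge> c * (norm u)\<^sup>2"
    and sub1: "subspace VH1" and sub2: "subspace VH2"
    and fin: "\<exists>B. finite B \<and> span B = {x + y |x y. x \<in> VH1 \<and> y \<in> VH2}"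
    and tau_pos: "tau > 0" and N_ge: "N \<ge> 2"
    and u1_in: "\<And>n. n \<le> N \<Longrightarrow> u1 n \<in> VH1"
    and u2_in: "\<And>n. n \<le> N \<Longrightarrow> u2 n \<in> VH2"
    and eq1: "\<And>n w. 1 \<le> n \<Longrightarrow> n \<le> N - 1 \<Longrightarrow> w \<in> VH1 \<Longrightarrow>
       inner ((u1 (n+1) + u2 (n+1)) - 2 *\<^sub>R (u1 n + u2 n) + (u1 (n-1) + u2 (n-1))) w
       + tau\<^sup>2 / 2 * a (u1 (n+1) + u1 (n-1) + 2 *\<^sub>R u2 n) w = 0"
    and eq2: "\<And>n w. 1 \<le> n \<Longrightarrow> n \<le> N - 1 \<Longrightarrow> w \<in> VH2 \<Longrightarrow>
       inner ((u1 (n+1) + u2 (n+1)) - 2 *\<^sub>R (u1 n + u2 n) + (u1 (n-1) + u2 (n-1))) w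
       + tau\<^sup>2 * a (u1 n + u2 n) w = 0"
  shows "\<forall>n. 1 \<le> n \<and> n \<le> N - 1 \<longrightarrow> energy a tau u1 u2 n = energy a tau u1 u2 (n - 1)"
proof (intro allI impI)
  fix n assume n: "1 \<le> n \<and> n \<le> N - 1"
  then obtain m where n_eq: "n = Suc m" by (cases n) auto
  with n have "Suc (Suc m) \<le> N" by simp
  then have "u1 (Suc (Suc m)) - u1 m \<in> VH1" "u2 (Suc (Suc m)) - u2 m \<in> VH2"
    using subspace_diff[OF sub1] subspace_diff[OF sub2] u1_in u2_in by simp_all
  with n n_eq eq1[of n] eq2[of n] show "energy a tau u1 u2 n = energy a tau u1 u2 (n - 1)"
    using energy_step_eq[OF a_bilinear a_sym] by simp
qed

end
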